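(* Let $(F_n)_{n\ge0}$ be the Fibonacci sequence ($F_0=0$, $F_1=1$, $F_{n+2}=F_{n+1}+F_n$) and $\alpha=(1+\sqrt5)/2$. Let $p\ge 5$ be a prime and $c$ an integer, and suppose $c=F_{k_i}-p^{\ell_i}$ for $i=1,\dots,m$, where $(k_i,\ell_i)$ are all the distinct pairs of integers with $k_i\ge 2$, $\ell_i\ge 0$ satisfying this, indexed so that $\ell_1>\ell_2>\cdots>\ell_m\ge 0$ (then $k_1>k_2>\cdots>k_m\ge 2$). Then for every $i=1,\dots,m-1$, $$k_i\log\alpha-\ell_i\log p\in\big(\log(\alpha/1.25),\,4\log\alpha\big)\subset(0.25,\,2).$$ *)

theory Defs
  imports Complex_Main "HOL-Computational_Algebra.Primes" "HOL-Number_Theory.Fib"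
begin

definition golden :: real where "golden = (1 + sqrt 5) / 2"

end

theory Submission
  imports Defs
begin

(* Let (K, L) and (K', L') be solutions with L' < L. Then F_K - F_K' = p^L - p^L', and since
   p >= 5 the right-hand side lies in [4/5 p^L, p^L). Hence K' < K, so
   F_(K-2) = F_K - F_(K-1) <= F_K - F_K' < p^L and 4/5 p^L < F_K. Combined with
   alpha^(n-2) <= F_n <= alpha^(n-1) this gives alpha/1.25 * p^L < alpha^K < alpha^4 * p^L,
   and taking logarithms yields the interval. The numerical inclusion amounts to
   exp(1/4) < alpha/1.25 and alpha^4 = 3 alpha + 2 < 7 < exp 2. *)

lemma golden_squared: "golden\<^sup>2 = golden + 1"
  unfolding golden_def by (simp add: power2_eq_square field_simps)

lemma golden_pow_4: "golden ^ 4 = 3 * golden + 2"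
proof -
  have "golden ^ 4 = (golden + 1)\<^sup>2" by (simp flip: golden_squared power_mult)
  then show ?thesis by (simp add: power2_sum golden_squared)
qed

lemma golden_lower_bound: "1.618 \<le> golden"
proof -
  have "2.236 \<le> sqrt 5" by (rule real_le_rsqrt) (simp add: power2_eq_square)
  then show ?thesis unfolding golden_def by simp
qed

lemma golden_upper_bound: "golden < 5 / 3"
proof -
  have "sqrt 5 < 7 / 3" by (rule real_less_lsqrt) (simp_all add: power2_eq_square)
  then show ?thesis unfolding golden_def by simp
qed

lemma golden_gt_1: "1 < golden"
  using golden_lower_bound by simp

lemma fib_Suc_le_golden_pow: "real (fib (Suc n)) \<le> golden ^ n"
proof (induction n rule: fib.induct)
  case (3 n)
  have "real (fib (Suc (Suc (Suc n)))) = real (fib (Suc (Suc n))) + real (fib (Suc n))" by simp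
  also have "\<dots> \<le> golden ^ Suc n + golden ^ n" using "3.IH" by (rule add_mono)
  also have "\<dots> = golden ^ n * (golden + 1)" by (simp add: algebra_simps)
  also have "\<dots> = golden ^ Suc (Suc n)" by (simp flip: golden_squared add: power2_eq_square)
  finally show ?case .
qed (use golden_gt_1 in simp_all)

lemma golden_pow_le_fib_Suc: "golden ^ n \<le> golden * real (fib (Suc n))"
proof (induction n rule: fib.induct)
  case (3 n)
  have "golden ^ Suc (Suc n) = golden ^ n * (golden + 1)"
    by (simp flip: golden_squared add: power2_eq_square)
  also have "\<dots> = golden ^ Suc n + golden ^ n" by (simp add: algebra_simps)
  also have "\<dots> \<le> golden * fib (Suc (Suc n)) + golden * fib (Suc n)" using "3.IH" by (rule add_mono)
  also have "\<dots> = golden * fib (Suc (Suc (Suc n)))" by (simp add: algebra_simps)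
  finally show ?case .
qed (use golden_gt_1 in simp_all)

lemma exp_quarter_less: "exp (1 / 4 :: real) < 1.2944"
proof -
  have "exp (1 / 4 :: real) = exp (1 / 16) ^ 4" by (simp flip: exp_of_nat_mult)
  also have "\<dots> \<le> (1 + 1 / 16 + (1 / 16)\<^sup>2) ^ 4"
    by (intro power_mono exp_bound) simp_all
  also have "\<dots> < 1.2944" by (simp add: power2_eq_square power_divide)
  finally show ?thesis .
qed

lemma exp_two_gt_7: "7 < exp (2 :: real)"
proof -
  have "(7 :: real) < (1 + 2 / 64) ^ 64" by (simp add: power_divide)
  also have "\<dots> \<le> exp 2" using exp_ge_one_plus_x_over_n_power_n[where x = 2 and n = 64] by simp
  finally show ?thesis .
qed

lemma golden_log_interval_subset: "{ln (golden / 1.25)<..<4 * ln golden} \<subseteq> {0.25<..<2}"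
proof -
  have "exp (1 / 4) < golden / 1.25" using exp_quarter_less golden_lower_bound by simp
  then have "ln (exp (1 / 4)) < ln (golden / 1.25)" using golden_gt_1 by (subst ln_less_cancel_iff) auto
  then have "1 / 4 < ln (golden / 1.25)" by simp
  moreover have "golden ^ 4 < exp 2" using golden_pow_4 golden_upper_bound exp_two_gt_7 by simp
  then have "ln (golden ^ 4) < ln (exp 2)" using golden_gt_1 by (subst ln_less_cancel_iff) auto
  then have "4 * ln golden < 2" by (simp add: ln_realpow)
  ultimately show ?thesis by auto
qed

lemma fib_pow_collision:
  fixes p :: nat
  assumes p: "5 \<le> p" and K': "1 \<le> K'" and LL: "L' < L"
    and eq: "int (fib K) - int p ^ L = int (fib K') - int p ^ L'"
  shows "K' < K" and "real (fib (K - 2)) < real p ^ L" and "4 / 5 * real p ^ L < real (fib K)"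
proof -
  have diff: "real (fib K) - real (fib K') = real p ^ L - real p ^ L'"
    using arg_cong[OF eq, of real_of_int] by simp
  have "5 * p ^ L' \<le> p ^ Suc L'" using p by simp
  also have "\<dots> \<le> p ^ L" using p LL by (intro power_increasing) auto
  finally have "real (5 * p ^ L') \<le> real (p ^ L)" by (simp only: of_nat_le_iff)
  then have small: "5 * real p ^ L' \<le> real p ^ L" by simp
  have pos: "0 < real p ^ L'" using p by simp
  with diff small have "real (fib K') < real (fib K)" by linarith
  then have "fib K' < fib K" by simp
  then show "K' < K" using fib_mono by (metis not_le)
  with K' have "2 \<le> K" by simp
  then obtain n where "K = 2 + n" using le_Suc_ex by blast
  then have K: "K = n + 2" by simp
  have "fib K' \<le> fib (n + 1)" using \<open>K' < K\<close> K by (intro fib_mono) simp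
  then have "real (fib K') \<le> real (fib (n + 1))" by simp
  moreover have "real (fib K) = real (fib (n + 1)) + real (fib n)" using K by (simp add: fib_plus_2)
  ultimately have "real (fib n) < real p ^ L" using diff pos by linarith
  then show "real (fib (K - 2)) < real p ^ L" using K by simp
  have "1 \<le> fib K'" using K' fib_neq_0_nat[of K'] by simp
  then show "4 / 5 * real p ^ L < real (fib K)" using diff small by simp
qed

lemma golden_pow_bounds:
  fixes x :: real
  assumes K: "3 \<le> K" and lower: "real (fib (K - 2)) < x" and upper: "4 / 5 * x < real (fib K)"
  shows "golden / 1.25 * x < golden ^ K" and "golden ^ K < golden ^ 4 * x"
proof -
  obtain n where "K = 3 + n" using le_Suc_ex[OF K] by blast
  then have n: "K = Suc (n + 2)" by simp
  have "golden / 1.25 * x = golden * (4 / 5 * x)" by simp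
  also have "\<dots> < golden * real (fib K)" using upper golden_gt_1 by simp
  also have "\<dots> \<le> golden * golden ^ (n + 2)"
    unfolding n by (intro mult_left_mono fib_Suc_le_golden_pow) (use golden_gt_1 in simp)
  also have "\<dots> = golden ^ K" using n by simp
  finally show "golden / 1.25 * x < golden ^ K" .
  have "K = n + 3" using n by simp
  then have "golden ^ K = golden ^ n * golden ^ 3" by (simp only: power_add)
  also have "\<dots> \<le> golden * real (fib (Suc n)) * golden ^ 3"
    using golden_pow_le_fib_Suc golden_gt_1 by (intro mult_right_mono) auto
  also have "\<dots> < golden * x * golden ^ 3" using lower n golden_gt_1 by simp
  also have "\<dots> = golden ^ 4 * x" by (simp add: power_numeral_reduce)
  finally show "golden ^ K < golden ^ 4 * x" .
qed

lemma ln_ratio_bounds: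
  fixes a b y z :: real
  assumes a: "0 < a" and y: "0 < y" and lower: "a * y < z" and upper: "z < b * y"
  shows "ln a < ln z - ln y \<and> ln z - ln y < ln b"
proof -
  have z: "0 < z" using a y lower by (meson mult_pos_pos order.strict_trans)
  have b: "0 < b" using y z upper by (meson order.strict_trans zero_less_mult_pos2)
  have "ln (a * y) < ln z" using lower a y z by (subst ln_less_cancel_iff) auto
  moreover have "ln z < ln (b * y)" using upper b y z by (subst ln_less_cancel_iff) auto
  ultimately show ?thesis using a b y by (simp add: ln_mult_pos)
qed

lemma fib_pow_collision_log_bounds:
  fixes p :: nat
  assumes p: "5 \<le> p" and K': "2 \<le> K'" and LL: "L' < L"
    and eq: "int (fib K) - int p ^ L = int (fib K') - int p ^ L'"
  shows "ln (golden / 1.25) < real K * ln golden - real L * ln (real p)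
         \<and> real K * ln golden - real L * ln (real p) < 4 * ln golden"
proof -
  have K'_pos: "1 \<le> K'" using K' by simp
  have K: "3 \<le> K" using fib_pow_collision(1)[OF p K'_pos LL eq] K' by simp
  note bounds = golden_pow_bounds[OF K fib_pow_collision(2,3)[OF p K'_pos LL eq]]
  have "0 < golden / 1.25" "0 < real p ^ L" using golden_gt_1 p by simp_all
  from ln_ratio_bounds[OF this bounds] show ?thesis by (simp only: ln_realpow of_nat_numeral)
qed

theorem lemma3p1:
  fixes p :: nat and c :: int and m :: nat and k l :: "nat \<Rightarrow> nat"
  assumes "prime p" and "p \<ge> 5"
    and sols: "{(kk, ll). kk \<ge> 2 \<and> c = int (fib kk) - int p ^ ll} = (\<lambda>i. (k i, l i)) ` {1..m}"
    and decr: "\<And>i. 1 \<le> i \<Longrightarrow> i < m \<Longrightarrow> l (Suc i) < l i"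
  shows "(\<forall>i\<in>{1..<m}.
           ln (golden / 1.25) < real (k i) * ln golden - real (l i) * ln (real p)
         \<and> real (k i) * ln golden - real (l i) * ln (real p) < 4 * ln golden)
         \<and> {ln (golden / 1.25)<..<4 * ln golden} \<subseteq> {0.25<..<2}"
proof (rule conjI[OF _ golden_log_interval_subset], intro ballI)
  fix i assume i: "i \<in> {1..<m}"
  then have "(k i, l i) \<in> (\<lambda>i. (k i, l i)) ` {1..m}"
    and "(k (Suc i), l (Suc i)) \<in> (\<lambda>i. (k i, l i)) ` {1..m}" by auto
  then have "c = int (fib (k i)) - int p ^ l i" and "2 \<le> k (Suc i)"
    and "c = int (fib (k (Suc i))) - int p ^ l (Suc i)"
    unfolding sols[symmetric] by auto
  moreover have "l (Suc i) < l i" using decr i by simp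
  ultimately show "ln (golden / 1.25) < real (k i) * ln golden - real (l i) * ln (real p)
      \<and> real (k i) * ln golden - real (l i) * ln (real p) < 4 * ln golden"
    using \<open>p \<ge> 5\<close> by (intro fib_pow_collision_log_bounds[where K' = "k (Suc i)"]) auto
qed

end
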